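(* For every $k\ge 1$, letting $n=t_k=\frac{k(k+1)}{2}$ and $K_n$ the complete graph of order $n$, we have ${\rm I}_e(K_n)=|E(K_n)|-\frac{k(k+1)(k-1)(3k+2)}{24}$.
   Context: All graphs are finite and simple. A graph is locally irregular if no two adjacent vertices have the same degree. An edge-irregulator of a graph $G$ is a set $S\subseteq E(G)$ such that $G-S$ is locally irregular; ${\rm I}_e(G)$ is the minimum cardinality of an edge-irregulator of $G$. $t_k$ denotes the $k$-th triangular number $1+2+\dots+k$. *)

theory Defs
  imports Main
begin

text \<open>Graphs are represented by their edge set (a set of 2-element sets).\<close>

definition degree :: "'a set set \<Rightarrow> 'a \<Rightarrow> nat" where
  "degree E v = card {e \<in> E. v \<in> e}"

definition locally_irregular :: "'a set set \<Rightarrow> bool" where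
  "locally_irregular E \<longleftrightarrow> (\<forall>u v. {u, v} \<in> E \<longrightarrow> u \<noteq> v \<longrightarrow> degree E u \<noteq> degree E v)"

text \<open>Edge-irregulator: S \<subseteq> E such that G - S is locally irregular
(removing edges does not change the vertex set, and degrees only depend on edges).\<close>
definition edge_irregulator :: "'a set set \<Rightarrow> 'a set set \<Rightarrow> bool" where
  "edge_irregulator E S \<longleftrightarrow> S \<subseteq> E \<and> locally_irregular (E - S)"

definition irr_e :: "'a set set \<Rightarrow> nat" where
  "irr_e E = Min (card ` {S. edge_irregulator E S})"

definition complete_graph_edges :: "nat \<Rightarrow> nat set set" where
  "complete_graph_edges n = {{u, v} | u v. u < n \<and> v < n \<and> u \<noteq> v}"

definition triangular :: "nat \<Rightarrow> nat" where
  "triangular k = (\<Sum>i=1..k. i)"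

end

theory Submission
  imports Defs
begin

text \<open>
  In a locally irregular subgraph \<open>H\<close> of \<open>K\<^sub>n\<close> every degree class is an independent set, so a
  vertex \<open>v\<close> has degree at most \<open>n - c\<close>, where \<open>c\<close> is the size of its degree class. Hence the
  vertices of co-degree \<open>n - deg v = j\<close> form a single class of size at most \<open>j\<close>, at most \<open>t\<^sub>j\<close> vertices
  have co-degree \<open>\<le> j\<close>, and for \<open>n = t\<^sub>k\<close> the co-degrees sum to at least \<open>1\<^sup>2 + \<dots> + k\<^sup>2\<close>.
  By the handshake lemma \<open>2 |H| \<le> n\<^sup>2 - (1\<^sup>2 + \<dots> + k\<^sup>2)\<close>, with equality for the complete
  multipartite graph with parts of sizes \<open>1, \<dots>, k\<close>. An optimal irregulator is the complement
  of a largest locally irregular subgraph.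
\<close>

lemma finite_complete_graph_edges: "finite (complete_graph_edges n)"
proof (rule finite_subset)
  show "complete_graph_edges n \<subseteq> Pow {..<n}"
    unfolding complete_graph_edges_def by auto
qed simp

lemma degree_eq_card_neighbours:
  assumes H: "H \<subseteq> complete_graph_edges n" and v: "v < n"
  shows "degree H v = card {u. u < n \<and> u \<noteq> v \<and> {v, u} \<in> H}"
proof -
  let ?N = "{u. u < n \<and> u \<noteq> v \<and> {v, u} \<in> H}"
  have "bij_betw (\<lambda>u. {v, u}) ?N {e \<in> H. v \<in> e}"
  proof (rule bij_betwI')
    fix e assume e: "e \<in> {e \<in> H. v \<in> e}"
    then obtain a b where ab: "e = {a, b}" "a < n" "b < n" "a \<noteq> b"
      using H unfolding complete_graph_edges_def by blast
    define u where "u = (if a = v then b else a)"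
    have "e = {v, u}" "u \<in> ?N"
      using e ab unfolding u_def by (auto simp: insert_commute)
    then show "\<exists>u\<in>?N. e = {v, u}" by blast
  qed (auto simp: doubleton_eq_iff)
  then show ?thesis
    unfolding degree_def by (simp add: bij_betw_same_card)
qed

lemma sum_degree_eq_twice_card:
  assumes H: "H \<subseteq> complete_graph_edges n"
  shows "(\<Sum>v<n. degree H v) = 2 * card H"
proof -
  have fin: "finite H"
    using H finite_complete_graph_edges by (rule finite_subset)
  have ends: "card {v. v < n \<and> v \<in> e} = 2" if "e \<in> H" for e
  proof -
    obtain a b where "e = {a, b}" "a < n" "b < n" "a \<noteq> b"
      using \<open>e \<in> H\<close> H unfolding complete_graph_edges_def by blast
    then have "{v. v < n \<and> v \<in> e} = {a, b}" by auto
    with \<open>a \<noteq> b\<close> show ?thesis by simp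
  qed
  have "(\<Sum>v<n. degree H v) = (\<Sum>v<n. \<Sum>e\<in>H. if v \<in> e then 1 else 0)"
    unfolding degree_def by (simp add: sum.inter_filter[OF fin, symmetric])
  also have "\<dots> = (\<Sum>e\<in>H. card {v. v < n \<and> v \<in> e})"
    by (subst sum.swap) (simp add: sum.inter_filter[symmetric])
  also have "\<dots> = 2 * card H"
    by (simp add: ends)
  finally show ?thesis .
qed

lemma triangular_Suc: "triangular (Suc j) = triangular j + Suc j"
  unfolding triangular_def by simp

lemma double_triangular: "2 * triangular k = k * (k + 1)"
  using double_gauss_sum_from_Suc_0[of k, where ?'a = nat] by (simp add: triangular_def)

lemma sum_squares_add_sum_triangular:
  "(\<Sum>i=1..m. i * i) + (\<Sum>j<m. triangular j) = m * triangular m"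
proof (induction m)
  case 0
  then show ?case by (simp add: triangular_def)
next
  case (Suc m)
  then show ?case by (simp add: triangular_Suc algebra_simps)
qed

text \<open>
  A counting form of the rearrangement inequality: if at most \<open>t\<^sub>j\<close> points have value \<open>\<le> j\<close>,
  then \<open>f\<close> is at least as large, in total, as the function taking the value \<open>i\<close> exactly \<open>i\<close> times.
\<close>
lemma sum_squares_le_sum_if_card_sublevel_le_triangular:
  fixes f :: "'a \<Rightarrow> nat"
  assumes fin: "finite V" and size: "triangular k \<le> card V"
    and sublevel: "\<And>j. card {v \<in> V. f v \<le> j} \<le> triangular j"
  shows "(\<Sum>i=1..k. i * i) \<le> (\<Sum>v\<in>V. f v)"
proof -
  have split: "card {v \<in> V. j < f v} + card {v \<in> V. f v \<le> j} = card V" for j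
  proof -
    have "card {v \<in> V. j < f v} + card {v \<in> V. f v \<le> j}
        = card ({v \<in> V. j < f v} \<union> {v \<in> V. f v \<le> j})"
      using fin by (intro card_Un_disjoint[symmetric]) auto
    also have "{v \<in> V. j < f v} \<union> {v \<in> V. f v \<le> j} = V" by auto
    finally show ?thesis .
  qed
  have "(\<Sum>j<k. card {v \<in> V. j < f v}) + (\<Sum>j<k. card {v \<in> V. f v \<le> j}) = k * card V"
    by (simp add: sum.distrib[symmetric] split)
  moreover have "(\<Sum>j<k. card {v \<in> V. f v \<le> j}) \<le> (\<Sum>j<k. triangular j)"
    by (rule sum_mono) (rule sublevel)
  moreover have "k * triangular k \<le> k * card V"
    using size by simp
  ultimately have "(\<Sum>i=1..k. i * i) \<le> (\<Sum>j<k. card {v \<in> V. j < f v})"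
    using sum_squares_add_sum_triangular[of k] by linarith
  also have "\<dots> = (\<Sum>j<k. \<Sum>v\<in>V. if j < f v then 1 else 0)"
    using fin by (simp add: sum.inter_filter[symmetric])
  also have "\<dots> = (\<Sum>v\<in>V. card {j \<in> {..<k}. j < f v})"
    by (subst sum.swap) (simp add: sum.inter_filter[symmetric])
  also have "\<dots> \<le> (\<Sum>v\<in>V. f v)"
  proof (rule sum_mono)
    fix v
    have "{j \<in> {..<k}. j < f v} \<subseteq> {..<f v}" by auto
    then show "card {j \<in> {..<k}. j < f v} \<le> f v"
      using card_mono[of "{..<f v}"] by fastforce
  qed
  finally show ?thesis .
qed

lemma degree_add_card_degree_class_le:
  assumes H: "H \<subseteq> complete_graph_edges n" and irr: "locally_irregular H" and v: "v < n"
  shows "degree H v + card {u. u < n \<and> degree H u = degree H v} \<le> n"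
proof -
  let ?N = "{u. u < n \<and> u \<noteq> v \<and> {v, u} \<in> H}"
  let ?C = "{u. u < n \<and> degree H u = degree H v}"
  have "?N \<inter> ?C = {}"
    using irr unfolding locally_irregular_def by fastforce
  then have "card ?N + card ?C = card (?N \<union> ?C)"
    by (simp add: card_Un_disjoint)
  also have "\<dots> \<le> card {..<n}"
    by (rule card_mono) auto
  finally show ?thesis
    using degree_eq_card_neighbours[OF H v] by simp
qed

lemma card_codegree_eq_le:
  assumes H: "H \<subseteq> complete_graph_edges n" and irr: "locally_irregular H"
  shows "card {v \<in> {..<n}. n - degree H v = j} \<le> j"
proof (cases "{v \<in> {..<n}. n - degree H v = j} = {}")
  case True
  then show ?thesis by (metis card.empty le0)
next
  case False
  then obtain w where w: "w < n" "n - degree H w = j" by auto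
  have class_bound: "degree H u + card {x. x < n \<and> degree H x = degree H u} \<le> n"
    if "u < n" for u
    using degree_add_card_degree_class_le[OF H irr that] .
  have "0 < card {x. x < n \<and> degree H x = degree H u}" if "u < n" for u
    using that by (auto simp: card_gt_0_iff)
  with class_bound have degree_less: "degree H u < n" if "u < n" for u
    using that by fastforce
  have "{v \<in> {..<n}. n - degree H v = j} \<subseteq> {x. x < n \<and> degree H x = degree H w}"
  proof
    fix v assume "v \<in> {v \<in> {..<n}. n - degree H v = j}"
    with w degree_less[of v] degree_less[of w] show "v \<in> {x. x < n \<and> degree H x = degree H w}"
      by auto
  qed
  then have "card {v \<in> {..<n}. n - degree H v = j} \<le> card {x. x < n \<and> degree H x = degree H w}"
    by (intro card_mono) auto
  also have "\<dots> \<le> j"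
    using class_bound[OF w(1)] w(2) by linarith
  finally show ?thesis .
qed

lemma card_codegree_le_triangular:
  assumes H: "H \<subseteq> complete_graph_edges n" and irr: "locally_irregular H"
  shows "card {v \<in> {..<n}. n - degree H v \<le> j} \<le> triangular j"
proof -
  have "{v \<in> {..<n}. n - degree H v \<le> j} = (\<Union>i\<in>{0..j}. {v \<in> {..<n}. n - degree H v = i})"
    by auto
  then have "card {v \<in> {..<n}. n - degree H v \<le> j} \<le> (\<Sum>i=0..j. card {v \<in> {..<n}. n - degree H v = i})"
    by (simp add: card_UN_le)
  also have "\<dots> \<le> (\<Sum>i=0..j. i)"
    by (rule sum_mono) (rule card_codegree_eq_le[OF H irr])
  also have "\<dots> = triangular j"
    unfolding triangular_def by (simp add: sum.atLeast_Suc_atMost)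
  finally show ?thesis .
qed

lemma locally_irregular_card_le:
  assumes H: "H \<subseteq> complete_graph_edges n" and irr: "locally_irregular H"
    and size: "triangular k \<le> n"
  shows "2 * card H + (\<Sum>i=1..k. i * i) \<le> n * n"
proof -
  have "(\<Sum>i=1..k. i * i) \<le> (\<Sum>v<n. n - degree H v)"
    using sum_squares_le_sum_if_card_sublevel_le_triangular[of "{..<n}" k]
      size card_codegree_le_triangular[OF H irr] by simp
  moreover have "(\<Sum>v<n. degree H v) + (\<Sum>v<n. n - degree H v) = n * n"
  proof -
    have "degree H v \<le> n" if "v < n" for v
      using degree_add_card_degree_class_le[OF H irr that] by simp
    then show ?thesis
      by (simp add: sum.distrib[symmetric])
  qed
  ultimately show ?thesis
    using sum_degree_eq_twice_card[OF H] by linarith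
qed

definition multipartite_edges :: "nat \<Rightarrow> (nat \<Rightarrow> 'b) \<Rightarrow> nat set set" where
  "multipartite_edges n p = {{u, v} | u v. u < n \<and> v < n \<and> p u \<noteq> p v}"

lemma multipartite_edges_subset: "multipartite_edges n p \<subseteq> complete_graph_edges n"
  unfolding multipartite_edges_def complete_graph_edges_def by blast

lemma degree_multipartite_edges:
  assumes v: "v < n"
  shows "degree (multipartite_edges n p) v = n - card {u. u < n \<and> p u = p v}"
proof -
  have adj: "{v, u} \<in> multipartite_edges n p \<longleftrightarrow> p u \<noteq> p v" if "u < n" for u
    using that v unfolding multipartite_edges_def by (auto simp: doubleton_eq_iff)
  have "degree (multipartite_edges n p) v
      = card {u. u < n \<and> u \<noteq> v \<and> {v, u} \<in> multipartite_edges n p}"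
    by (rule degree_eq_card_neighbours[OF multipartite_edges_subset v])
  also have "{u. u < n \<and> u \<noteq> v \<and> {v, u} \<in> multipartite_edges n p}
      = {..<n} - {u. u < n \<and> p u = p v}"
    using adj by auto
  also have "card \<dots> = n - card {u. u < n \<and> p u = p v}"
    by (subst card_Diff_subset) auto
  finally show ?thesis .
qed

lemma locally_irregular_multipartite_edges:
  assumes sizes: "\<And>u v. u < n \<Longrightarrow> v < n \<Longrightarrow>
      card {x. x < n \<and> p x = p u} = card {x. x < n \<and> p x = p v} \<Longrightarrow> p u = p v"
  shows "locally_irregular (multipartite_edges n p)"
  unfolding locally_irregular_def
proof (intro allI impI)
  fix u v assume "{u, v} \<in> multipartite_edges n p" "u \<noteq> v"
  then have uv: "u < n" "v < n" "p u \<noteq> p v"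
    unfolding multipartite_edges_def by (auto simp: doubleton_eq_iff)
  have bound: "card {x. x < n \<and> p x = p w} \<le> n" for w
    using card_mono[of "{..<n}" "{x. x < n \<and> p x = p w}"] by auto
  have "card {x. x < n \<and> p x = p u} \<noteq> card {x. x < n \<and> p x = p v}"
    using sizes uv by blast
  with bound[of u] bound[of v] show
    "degree (multipartite_edges n p) u \<noteq> degree (multipartite_edges n p) v"
    using uv by (simp add: degree_multipartite_edges)
qed

lemma partition_with_part_sizes_1_to_k:
  obtains p :: "nat \<Rightarrow> nat"
  where "\<And>v. v < triangular k \<Longrightarrow> card {u. u < triangular k \<and> p u = p v} = p v"
    and "(\<Sum>v<triangular k. p v) = (\<Sum>i=1..k. i * i)"
proof -
  define P where "P = Sigma {1..k} (\<lambda>i. {..<i::nat})"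
  have "finite P" "card P = triangular k"
    unfolding P_def triangular_def by simp_all
  then obtain g where g: "bij_betw g {..<triangular k} P"
    using finite_same_card_bij[of "{..<triangular k}" P] by auto
  define p where "p v = fst (g v)" for v
  have "card {u. u < triangular k \<and> p u = p v} = p v" if v: "v < triangular k" for v
  proof -
    have "inj_on g {u. u < triangular k \<and> p u = p v}"
      using g unfolding bij_betw_def by (auto intro: inj_on_subset)
    then have "card {u. u < triangular k \<and> p u = p v}
        = card (g ` {u. u < triangular k \<and> p u = p v})"
      by (simp add: card_image)
    also have "g ` {u. u < triangular k \<and> p u = p v} = {b \<in> P. fst b = p v}"
      using g unfolding p_def bij_betw_def by auto
    also have "\<dots> = {p v} \<times> {..<p v}"
    proof -
      have "g v \<in> P"
        using g v by (simp add: bij_betw_apply)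
      then have "p v \<in> {1..k}"
        unfolding P_def p_def by (cases "g v") auto
      then show ?thesis
        unfolding P_def by auto
    qed
    finally show ?thesis
      by (simp add: card_cartesian_product)
  qed
  moreover have "(\<Sum>v<triangular k. p v) = (\<Sum>i=1..k. i * i)"
  proof -
    have "(\<Sum>v<triangular k. p v) = (\<Sum>b\<in>P. fst b)"
      unfolding p_def by (rule sum.reindex_bij_betw[OF g])
    also have "\<dots> = (\<Sum>i=1..k. \<Sum>j<i. i)"
      unfolding P_def
      using sum.Sigma[of "{1..k}" "\<lambda>i. {..<i}" "\<lambda>i j. i"] by (simp add: case_prod_beta')
    finally show ?thesis by simp
  qed
  ultimately show ?thesis by (rule that)
qed

lemma exists_locally_irregular_card_eq:
  obtains H where "H \<subseteq> complete_graph_edges (triangular k)" "locally_irregular H"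
    and "2 * card H + (\<Sum>i=1..k. i * i) = triangular k * triangular k"
proof -
  let ?n = "triangular k"
  obtain p where part: "\<And>v. v < ?n \<Longrightarrow> card {u. u < ?n \<and> p u = p v} = p v"
    and sum_p: "(\<Sum>v<?n. p v) = (\<Sum>i=1..k. i * i)"
    using partition_with_part_sizes_1_to_k[of k] by blast
  let ?H = "multipartite_edges ?n p"
  have irr: "locally_irregular ?H"
    by (rule locally_irregular_multipartite_edges) (simp add: part)
  have "p v \<le> ?n" if "v < ?n" for v
    using part[OF that] card_mono[of "{..<?n}" "{u. u < ?n \<and> p u = p v}"] by auto
  then have "(\<Sum>v<?n. degree ?H v) + (\<Sum>v<?n. p v) = ?n * ?n"
    by (simp add: degree_multipartite_edges part sum.distrib[symmetric])
  then have "2 * card ?H + (\<Sum>i=1..k. i * i) = ?n * ?n"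
    using sum_degree_eq_twice_card[OF multipartite_edges_subset[of ?n p]] sum_p by simp
  with multipartite_edges_subset irr show ?thesis by (rule that)
qed

lemma irr_e_eq_card_diff_largest_locally_irregular:
  assumes fin: "finite E" and H: "H \<subseteq> E" "locally_irregular H"
    and largest: "\<And>H'. H' \<subseteq> E \<Longrightarrow> locally_irregular H' \<Longrightarrow> card H' \<le> card H"
  shows "irr_e E = card E - card H"
  unfolding irr_e_def
proof (rule Min_eqI)
  have "{S. edge_irregulator E S} \<subseteq> Pow E"
    unfolding edge_irregulator_def by auto
  with fin show "finite (card ` {S. edge_irregulator E S})"
    by (meson finite_Pow_iff finite_imageI finite_subset)
next
  fix c assume "c \<in> card ` {S. edge_irregulator E S}"
  then obtain S where S: "S \<subseteq> E" "locally_irregular (E - S)" and c: "c = card S"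
    unfolding edge_irregulator_def by auto
  have "card E - card S \<le> card H"
    using largest[of "E - S"] S fin by (simp add: card_Diff_subset finite_subset)
  with c show "card E - card H \<le> c" by linarith
next
  have "edge_irregulator E (E - H)"
    unfolding edge_irregulator_def using H by (simp add: double_diff)
  moreover have "card (E - H) = card E - card H"
    using H fin by (simp add: card_Diff_subset finite_subset)
  ultimately show "card E - card H \<in> card ` {S. edge_irregulator E S}"
    by force
qed

lemma six_sum_squares: "6 * (\<Sum>i=1..k. i * i) = (k::nat) * (k + 1) * (2 * k + 1)"
  by (induction k) (auto simp: algebra_simps)

lemma eq_div_24_if_twice_add_sum_squares_eq:
  assumes "2 * M + (\<Sum>i=1..k. i * i) = triangular k * triangular k"
  shows "M = k * (k + 1) * (k - 1) * (3 * k + 2) div 24"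
proof -
  have "24 * M + 2 * (6 * (\<Sum>i=1..k. i * i)) = 3 * (2 * triangular k) * (2 * triangular k)"
    using assms by simp
  then have "24 * M + 2 * (k * (k + 1) * (2 * k + 1)) = 3 * (k * (k + 1)) * (k * (k + 1))"
    by (simp only: six_sum_squares double_triangular)
  moreover have "k * (k + 1) * (k - 1) * (3 * k + 2) + 2 * (k * (k + 1) * (2 * k + 1))
      = 3 * (k * (k + 1)) * (k * (k + 1))"
    by (cases k) (simp_all add: algebra_simps)
  ultimately show ?thesis by simp
qed

theorem theorem10:
  fixes k :: nat
  assumes "k \<ge> 1"
  shows "int (irr_e (complete_graph_edges (triangular k))) =
         int (card (complete_graph_edges (triangular k)))
         - int (k * (k + 1) * (k - 1) * (3 * k + 2) div 24)"
proof -
  let ?E = "complete_graph_edges (triangular k)"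
  obtain H where H: "H \<subseteq> ?E" "locally_irregular H"
    and card_H: "2 * card H + (\<Sum>i=1..k. i * i) = triangular k * triangular k"
    by (rule exists_locally_irregular_card_eq)
  have "card H' \<le> card H" if "H' \<subseteq> ?E" "locally_irregular H'" for H'
    using locally_irregular_card_le[OF that, of k] card_H by simp
  then have "irr_e ?E = card ?E - card H"
    using irr_e_eq_card_diff_largest_locally_irregular[OF finite_complete_graph_edges H] by blast
  moreover have "card H \<le> card ?E"
    using H(1) finite_complete_graph_edges by (rule card_mono[rotated])
  moreover have "card H = k * (k + 1) * (k - 1) * (3 * k + 2) div 24"
    using eq_div_24_if_twice_add_sum_squares_eq[OF card_H] .
  ultimately show ?thesis by simp
qed

end
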